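(* Let $G$ be an edge-maximal $K_{3,3}$-minor free graph of order $n\geq 374$ with $n-3\leq \Delta(G)\leq n-2$. Then $q(G)\leq n+2$.
   Context: All graphs are finite, simple and undirected. $q(G)$ is the largest eigenvalue of the signless Laplacian matrix $Q(G)=D(G)+A(G)$. $\Delta(G)$ is the maximum degree of $G$. A graph $H$ is a minor of $G$ if $H$ can be obtained from $G$ by deleting edges, contracting edges, or deleting vertices; $G$ is $H$-minor free if it has no minor isomorphic to $H$. $G$ is edge-maximal $H$-minor free if $G$ is $H$-minor free and adding any edge joining two nonadjacent vertices of $G$ produces a graph having $H$ as a minor. $K_{3,3}$ is the complete bipartite graph with both parts of size 3. *)

theory Defs
  imports Complex_Main
begin

definition simple_graph :: "'a set \<Rightarrow> ('a \<Rightarrow> 'a \<Rightarrow> bool) \<Rightarrow> bool" where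
  "simple_graph V E \<longleftrightarrow> finite V \<and>
     (\<forall>x y. E x y \<longrightarrow> x \<in> V \<and> y \<in> V \<and> x \<noteq> y \<and> E y x)"

definition degree :: "'a set \<Rightarrow> ('a \<Rightarrow> 'a \<Rightarrow> bool) \<Rightarrow> 'a \<Rightarrow> nat" where
  "degree V E v = card {u \<in> V. E v u}"

definition max_degree :: "'a set \<Rightarrow> ('a \<Rightarrow> 'a \<Rightarrow> bool) \<Rightarrow> nat" where
  "max_degree V E = Max (degree V E ` V)"

inductive minor_of :: "'a set \<Rightarrow> ('a \<Rightarrow> 'a \<Rightarrow> bool) \<Rightarrow> 'a set \<Rightarrow> ('a \<Rightarrow> 'a \<Rightarrow> bool) \<Rightarrow> bool"
  for V :: "'a set" and E :: "'a \<Rightarrow> 'a \<Rightarrow> bool" where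
  refl: "minor_of V E V E"
| del_edge: "minor_of V E W F \<Longrightarrow> F u v \<Longrightarrow>
     minor_of V E W (\<lambda>x y. F x y \<and> {x, y} \<noteq> {u, v})"
| del_vertex: "minor_of V E W F \<Longrightarrow> w \<in> W \<Longrightarrow>
     minor_of V E (W - {w}) (\<lambda>x y. F x y \<and> x \<noteq> w \<and> y \<noteq> w)"
| contract: "minor_of V E W F \<Longrightarrow> F u v \<Longrightarrow>
     minor_of V E (W - {v})
       (\<lambda>x y. x \<noteq> y \<and> x \<noteq> v \<and> y \<noteq> v \<and> (F x y \<or> (x = u \<and> F v y) \<or> (y = u \<and> F x v)))"

text \<open>(W,F) is isomorphic to K_{3,3}: vertices {0..5}, parts {0,1,2} and {3,4,5}.\<close>
definition iso_K33 :: "'a set \<Rightarrow> ('a \<Rightarrow> 'a \<Rightarrow> bool) \<Rightarrow> bool" where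
  "iso_K33 W F \<longleftrightarrow> (\<exists>f. bij_betw f W {0..<6::nat} \<and>
     (\<forall>x\<in>W. \<forall>y\<in>W. F x y \<longleftrightarrow> ((f x < 3) \<noteq> (f y < 3))))"

definition has_K33_minor :: "'a set \<Rightarrow> ('a \<Rightarrow> 'a \<Rightarrow> bool) \<Rightarrow> bool" where
  "has_K33_minor V E \<longleftrightarrow> (\<exists>W F. minor_of V E W F \<and> iso_K33 W F)"

definition add_edge :: "('a \<Rightarrow> 'a \<Rightarrow> bool) \<Rightarrow> 'a \<Rightarrow> 'a \<Rightarrow> ('a \<Rightarrow> 'a \<Rightarrow> bool)" where
  "add_edge E u v = (\<lambda>x y. E x y \<or> (x = u \<and> y = v) \<or> (x = v \<and> y = u))"

definition edge_maximal_K33_minor_free :: "'a set \<Rightarrow> ('a \<Rightarrow> 'a \<Rightarrow> bool) \<Rightarrow> bool" where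
  "edge_maximal_K33_minor_free V E \<longleftrightarrow> \<not> has_K33_minor V E \<and>
     (\<forall>u\<in>V. \<forall>v\<in>V. u \<noteq> v \<and> \<not> E u v \<longrightarrow> has_K33_minor V (add_edge E u v))"

definition signless_laplacian_apply ::
  "'a set \<Rightarrow> ('a \<Rightarrow> 'a \<Rightarrow> bool) \<Rightarrow> ('a \<Rightarrow> real) \<Rightarrow> 'a \<Rightarrow> real" where
  "signless_laplacian_apply V E x v =
     real (degree V E v) * x v + (\<Sum>u\<in>{u \<in> V. E v u}. x u)"

definition Q_eigenvalue :: "'a set \<Rightarrow> ('a \<Rightarrow> 'a \<Rightarrow> bool) \<Rightarrow> real \<Rightarrow> bool" where
  "Q_eigenvalue V E mu \<longleftrightarrow> (\<exists>x. (\<exists>v\<in>V. x v \<noteq> 0) \<and>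
     (\<forall>v\<in>V. signless_laplacian_apply V E x v = mu * x v))"

definition q_index :: "'a set \<Rightarrow> ('a \<Rightarrow> 'a \<Rightarrow> bool) \<Rightarrow> real" where
  "q_index V E = Max {mu. Q_eigenvalue V E mu}"

end

theory Submission
  imports Defs "Jordan_Normal_Form.Spectral_Radius"
begin

text \<open>
  A positive vector \<open>x\<close> with \<open>Q x \<le> (n + 2) x\<close> entrywise bounds every eigenvalue of \<open>Q\<close> by \<open>n + 2\<close>.
  We take \<open>x\<^sub>v = (d\<^sub>v + 3m/2) / (m - d\<^sub>v)\<close> with \<open>m = n + 2\<close>; at a vertex \<open>v\<close> the required inequality
  becomes \<open>\<Sum>\<^sub>w\<^sub>~\<^sub>v 1/(m - d\<^sub>w) \<le> (4 d\<^sub>v + 3m) / (5m)\<close>. Two consequences of \<open>K\<^sub>3\<^sub>,\<^sub>3\<close>-minor-freeness make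
  this hold for \<open>n \<ge> 374\<close>: Mader's contraction argument, run from \<open>K\<^sub>1\<^sub>,\<^sub>3\<close> through \<open>K\<^sub>2\<^sub>,\<^sub>3\<close>, gives
  fewer than \<open>6n\<close> edges, so the neighbours of small degree contribute little beyond \<open>d\<^sub>v / m\<close>;
  and three vertices have at most two common neighbours, so \<open>d\<^sub>a + d\<^sub>b + d\<^sub>c \<le> 2n + 2\<close> and at most
  two vertices have degree above \<open>(2n + 2)/3\<close>.
\<close>

definition neighbours :: "'a set \<Rightarrow> ('a \<Rightarrow> 'a \<Rightarrow> bool) \<Rightarrow> 'a \<Rightarrow> 'a set" where
  "neighbours V E v = {u \<in> V. E v u}"

definition induced_edges :: "('a \<Rightarrow> 'a \<Rightarrow> bool) \<Rightarrow> 'a set \<Rightarrow> 'a \<Rightarrow> 'a \<Rightarrow> bool" where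
  "induced_edges E S = (\<lambda>x y. E x y \<and> x \<in> S \<and> y \<in> S)"

definition add_apex :: "'a \<Rightarrow> 'a set \<Rightarrow> ('a \<Rightarrow> 'a \<Rightarrow> bool) \<Rightarrow> 'a \<Rightarrow> 'a \<Rightarrow> bool" where
  "add_apex v W F = (\<lambda>x y. F x y \<or> (x = v \<and> y \<in> W) \<or> (y = v \<and> x \<in> W))"

definition contract_edge :: "('a \<Rightarrow> 'a \<Rightarrow> bool) \<Rightarrow> 'a \<Rightarrow> 'a \<Rightarrow> 'a \<Rightarrow> 'a \<Rightarrow> bool" where
  "contract_edge F u v =
     (\<lambda>x y. x \<noteq> y \<and> x \<noteq> v \<and> y \<noteq> v \<and> (F x y \<or> (x = u \<and> F v y) \<or> (y = u \<and> F x v)))"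

lemma degree_eq_card_neighbours: "Defs.degree V E v = card (neighbours V E v)"
  unfolding Defs.degree_def neighbours_def ..

lemma simple_graphD:
  "simple_graph V E \<Longrightarrow> E x y \<Longrightarrow> x \<in> V \<and> y \<in> V \<and> x \<noteq> y \<and> E y x"
  unfolding simple_graph_def by blast

lemma simple_graph_finite: "simple_graph V E \<Longrightarrow> finite V"
  unfolding simple_graph_def by blast

lemma simple_graphI:
  "finite V \<Longrightarrow> (\<And>x y. E x y \<Longrightarrow> x \<in> V \<and> y \<in> V \<and> x \<noteq> y \<and> E y x) \<Longrightarrow> simple_graph V E"
  unfolding simple_graph_def by blast

lemma simple_graph_induced:
  assumes "simple_graph V E" "S \<subseteq> V"
  shows "simple_graph S (induced_edges E S)"
  using assms finite_subset[OF assms(2) simple_graph_finite[OF assms(1)]] simple_graphD[OF assms(1)]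
  by (intro simple_graphI) (auto simp: induced_edges_def)

lemma neighbours_subset: "neighbours V E v \<subseteq> V"
  unfolding neighbours_def by blast

lemma simple_graph_edge_in: "simple_graph V E \<Longrightarrow> E x y \<Longrightarrow> x \<in> V \<and> y \<in> V"
  by (simp add: simple_graphD)

lemma simple_graph_sym: "simple_graph V E \<Longrightarrow> E x y \<Longrightarrow> E y x"
  by (simp add: simple_graphD)

lemma simple_graph_irrefl: "simple_graph V E \<Longrightarrow> E x y \<Longrightarrow> x \<noteq> y"
  by (simp add: simple_graphD)

lemma finite_neighbours: "simple_graph V E \<Longrightarrow> finite (neighbours V E v)"
  using finite_subset[OF neighbours_subset simple_graph_finite] .

lemma minor_of_cong: "minor_of V E W F \<Longrightarrow> W = W' \<Longrightarrow> F = F' \<Longrightarrow> minor_of V E W' F'"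
  by simp

lemma minor_of_contract: "minor_of V E W F \<Longrightarrow> F u v \<Longrightarrow> minor_of V E (W - {v}) (contract_edge F u v)"
  unfolding contract_edge_def by (rule minor_of.contract)

lemma minor_of_simple_graph:
  assumes "minor_of V E W F" "simple_graph V E"
  shows "simple_graph W F \<and> W \<subseteq> V"
  using assms
proof (induction rule: minor_of.induct)
  case refl
  then show ?case by blast
next
  case (del_edge W F u v)
  then have "simple_graph W F" "W \<subseteq> V" by auto
  then show ?case
    using simple_graph_finite simple_graphD
    by (intro conjI simple_graphI) (fastforce simp: insert_commute)+
next
  case (del_vertex W F w)
  then have "simple_graph W F" "W \<subseteq> V" by auto
  then show ?case
    using simple_graph_finite simple_graphD by (intro conjI simple_graphI) fastforce+
next
  case (contract W F u v)
  then have G: "simple_graph W F" "W \<subseteq> V" by auto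
  have "u \<in> W" using simple_graphD[OF G(1) contract.hyps(2)] by blast
  with G show ?case
    using simple_graph_finite simple_graphD by (intro conjI simple_graphI) fastforce+
qed

lemma minor_of_trans:
  assumes "minor_of W1 F1 W F" "minor_of V E W1 F1"
  shows "minor_of V E W F"
  using assms(1) by induction (auto intro: assms(2) minor_of.intros)

lemma minor_of_delete_vertices:
  assumes "minor_of V E W F" "finite T" "T \<subseteq> W"
  shows "minor_of V E (W - T) (\<lambda>x y. F x y \<and> x \<notin> T \<and> y \<notin> T)"
  using assms(2,3)
proof (induction T rule: finite_induct)
  case empty
  then show ?case using assms(1) by simp
next
  case (insert w T)
  then have "minor_of V E (W - T) (\<lambda>x y. F x y \<and> x \<notin> T \<and> y \<notin> T)" "w \<in> W - T" by auto
  from minor_of.del_vertex[OF this] show ?case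
    by (simp add: set_diff_eq conj_ac)
qed

lemma minor_of_induced:
  assumes "minor_of V E W F" "simple_graph V E" "S \<subseteq> W"
  shows "minor_of V E S (induced_edges F S)"
proof -
  have G: "simple_graph W F" using minor_of_simple_graph[OF assms(1,2)] by blast
  have "minor_of V E (W - (W - S)) (\<lambda>x y. F x y \<and> x \<notin> W - S \<and> y \<notin> W - S)"
    using simple_graph_finite[OF G] by (intro minor_of_delete_vertices[OF assms(1)]) auto
  moreover have "W - (W - S) = S" using assms(3) by blast
  moreover have "(\<lambda>x y. F x y \<and> x \<notin> W - S \<and> y \<notin> W - S) = induced_edges F S"
    using simple_graphD[OF G] by (auto simp: induced_edges_def fun_eq_iff)
  ultimately show ?thesis by simp
qed

lemma minor_of_delete_edges:
  assumes "minor_of V E W F" "simple_graph V E" "\<forall>x y. F' x y \<longrightarrow> F x y" "\<forall>x y. F' x y \<longrightarrow> F' y x"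
  shows "minor_of V E W F'"
  using assms(1,3)
proof (induction "card {(x, y). F x y \<and> \<not> F' x y}" arbitrary: F rule: less_induct)
  case (less F)
  show ?case
  proof (cases "\<exists>u v. F u v \<and> \<not> F' u v")
    case False
    then have "F = F'" using less.prems(2) by (auto simp: fun_eq_iff)
    then show ?thesis using less.prems(1) by simp
  next
    case True
    then obtain u v where uv: "F u v" "\<not> F' u v" by blast
    define F2 where "F2 = (\<lambda>x y. F x y \<and> {x, y} \<noteq> {u, v})"
    have G: "simple_graph W F" using minor_of_simple_graph[OF less.prems(1) assms(2)] by blast
    have "finite {(x, y). F x y \<and> \<not> F' x y}"
      by (rule finite_subset[of _ "W \<times> W"]) (use simple_graphD[OF G] simple_graph_finite[OF G] in auto)
    moreover have "{(x, y). F2 x y \<and> \<not> F' x y} \<subset> {(x, y). F x y \<and> \<not> F' x y}"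
      using uv unfolding F2_def by auto
    ultimately have "card {(x, y). F2 x y \<and> \<not> F' x y} < card {(x, y). F x y \<and> \<not> F' x y}"
      by (rule psubset_card_mono)
    moreover have "minor_of V E W F2"
      unfolding F2_def by (rule minor_of.del_edge[OF less.prems(1) uv(1)])
    moreover have "\<forall>x y. F' x y \<longrightarrow> F2 x y"
      using less.prems(2) assms(4) uv(2) unfolding F2_def by (auto simp: doubleton_eq_iff)
    ultimately show ?thesis by (rule less.hyps)
  qed
qed

lemma minor_of_subgraph:
  assumes "minor_of V E W F" "simple_graph V E" "S \<subseteq> W"
    and "\<forall>x y. F' x y \<longrightarrow> F x y \<and> x \<in> S \<and> y \<in> S" "\<forall>x y. F' x y \<longrightarrow> F' y x"
  shows "minor_of V E S F'"
  using assms(4,5)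
  by (intro minor_of_delete_edges[OF minor_of_induced[OF assms(1-3)] assms(2)])
    (auto simp: induced_edges_def)

lemma minor_of_add_apex:
  assumes "minor_of N G W F" "simple_graph N G" "v \<notin> N"
  shows "minor_of (insert v N) (add_apex v N G) (insert v W) (add_apex v W F)"
  using assms(1)
proof (induction rule: minor_of.induct)
  case refl
  show ?case by (rule minor_of.refl)
next
  case (del_edge W F x y)
  have G: "simple_graph W F" "W \<subseteq> N" using minor_of_simple_graph[OF del_edge.hyps(1) assms(2)] by auto
  have "add_apex v W F x y" using del_edge.hyps(2) by (simp add: add_apex_def)
  from minor_of.del_edge[OF del_edge.IH this] show ?case
    by (rule minor_of_cong)
      (use simple_graphD[OF G(1) del_edge.hyps(2)] G(2) assms(3) in
        \<open>auto simp: add_apex_def fun_eq_iff doubleton_eq_iff\<close>)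
next
  case (del_vertex W F w)
  have G: "W \<subseteq> N" using minor_of_simple_graph[OF del_vertex.hyps(1) assms(2)] by auto
  have "w \<in> insert v W" using del_vertex.hyps(2) by simp
  from minor_of.del_vertex[OF del_vertex.IH this] show ?case
    by (rule minor_of_cong) (use del_vertex.hyps(2) G assms(3) in \<open>auto simp: add_apex_def fun_eq_iff\<close>)
next
  case (contract W F x y)
  have G: "simple_graph W F" "W \<subseteq> N" using minor_of_simple_graph[OF contract.hyps(1) assms(2)] by auto
  have xy: "x \<in> W" "y \<in> W" "x \<noteq> y" using simple_graphD[OF G(1) contract.hyps(2)] by blast+
  have vW: "v \<notin> W" using G(2) assms(3) by blast
  have "add_apex v W F x y" using contract.hyps(2) by (simp add: add_apex_def)
  from minor_of.contract[OF contract.IH this] show ?case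
    by (rule minor_of_cong) (use xy vW simple_graphD[OF G(1)] in \<open>auto simp: add_apex_def fun_eq_iff\<close>)
qed

section \<open>Minors isomorphic to \<open>K\<^sub>s\<^sub>,\<^sub>3\<close>\<close>

definition is_Ks3 :: "nat \<Rightarrow> 'a set \<Rightarrow> ('a \<Rightarrow> 'a \<Rightarrow> bool) \<Rightarrow> bool" where
  "is_Ks3 s W F \<longleftrightarrow> (\<exists>A B. W = A \<union> B \<and> A \<inter> B = {} \<and> finite A \<and> card A = s \<and> card B = 3 \<and>
      (\<forall>x y. F x y \<longleftrightarrow> (x \<in> A \<and> y \<in> B) \<or> (x \<in> B \<and> y \<in> A)))"

definition has_Ks3_minor :: "nat \<Rightarrow> 'a set \<Rightarrow> ('a \<Rightarrow> 'a \<Rightarrow> bool) \<Rightarrow> bool" where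
  "has_Ks3_minor s V E \<longleftrightarrow> (\<exists>W F. minor_of V E W F \<and> is_Ks3 s W F)"

lemma is_Ks3_3_iso_K33:
  assumes "is_Ks3 3 W F"
  shows "iso_K33 W F"
proof -
  from assms obtain A B where W: "W = A \<union> B" "A \<inter> B = {}" "card A = 3" "card B = 3"
    and F: "\<forall>x y. F x y \<longleftrightarrow> (x \<in> A \<and> y \<in> B) \<or> (x \<in> B \<and> y \<in> A)"
    unfolding is_Ks3_def by blast
  from W(3) obtain a0 a1 a2 where A: "A = {a0, a1, a2}" "a0 \<noteq> a1" "a1 \<noteq> a2" "a0 \<noteq> a2"
    unfolding card_3_iff by blast
  from W(4) obtain b0 b1 b2 where B: "B = {b0, b1, b2}" "b0 \<noteq> b1" "b1 \<noteq> b2" "b0 \<noteq> b2"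
    unfolding card_3_iff by blast
  define f where "f x = (if x = a0 then 0 else if x = a1 then 1 else if x = a2 then 2 else
      if x = b0 then 3 else if x = b1 then 4 else (5::nat))" for x
  have dis: "a0 \<noteq> b0" "a0 \<noteq> b1" "a0 \<noteq> b2" "a1 \<noteq> b0" "a1 \<noteq> b1" "a1 \<noteq> b2"
    "a2 \<noteq> b0" "a2 \<noteq> b1" "a2 \<noteq> b2"
    using W(2) unfolding A(1) B(1) by auto
  have vals: "f a0 = 0" "f a1 = 1" "f a2 = 2" "f b0 = 3" "f b1 = 4" "f b2 = 5"
    unfolding f_def using A(2-4) B(2-4) dis by simp_all
  have W6: "W = {a0, a1, a2, b0, b1, b2}" using W(1) A(1) B(1) by auto
  have "inj_on f W" unfolding W6 inj_on_def by (simp add: vals)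
  moreover have "f ` W = {0..<6}" unfolding W6 by (auto simp: vals)
  ultimately have "bij_betw f W {0..<6}" unfolding bij_betw_def by blast
  moreover have "(f x < 3) \<longleftrightarrow> x \<in> A" if "x \<in> W" for x
    using that unfolding W6 A(1) using vals A(2-4) B(2-4) dis by auto
  then have "\<forall>x\<in>W. \<forall>y\<in>W. F x y \<longleftrightarrow> ((f x < 3) \<noteq> (f y < 3))"
    using F W(1,2) by blast
  ultimately show ?thesis unfolding iso_K33_def by blast
qed

lemma has_K33_minor_if_has_Ks3_minor: "has_Ks3_minor 3 V E \<Longrightarrow> has_K33_minor V E"
  unfolding has_Ks3_minor_def has_K33_minor_def using is_Ks3_3_iso_K33 by blast

lemma has_Ks3_minor_if_complete_bipartite_subgraph:
  assumes "simple_graph V E" "A \<subseteq> V" "B \<subseteq> V" "A \<inter> B = {}" "card A = s" "card B = 3"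
    and "\<And>a b. a \<in> A \<Longrightarrow> b \<in> B \<Longrightarrow> E a b"
  shows "has_Ks3_minor s V E"
proof -
  define F where "F = (\<lambda>x y. (x \<in> A \<and> y \<in> B) \<or> (x \<in> B \<and> y \<in> A))"
  have "minor_of V E (A \<union> B) F"
    using assms(2,3,7) simple_graphD[OF assms(1)]
    by (intro minor_of_subgraph[OF minor_of.refl assms(1)]) (auto simp: F_def)
  moreover have "finite A" using assms(2) simple_graph_finite[OF assms(1)] by (rule finite_subset)
  then have "is_Ks3 s (A \<union> B) F"
    unfolding is_Ks3_def F_def using assms(4-6) by blast
  ultimately show ?thesis unfolding has_Ks3_minor_def by blast
qed

lemma has_K13_minor:
  assumes "simple_graph V E" "v \<in> V" "3 \<le> Defs.degree V E v"
  shows "has_Ks3_minor 1 V E"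
proof -
  obtain B where B: "B \<subseteq> neighbours V E v" "card B = 3"
    using obtain_subset_with_card_n assms(3) unfolding degree_eq_card_neighbours by metis
  have "v \<notin> B" using B(1) simple_graphD[OF assms(1)] unfolding neighbours_def by blast
  with assms B show ?thesis
    by (intro has_Ks3_minor_if_complete_bipartite_subgraph[of V E "{v}" B])
      (auto simp: neighbours_def)
qed

lemma has_Ks3_minor_Suc_if_neighbourhood:
  assumes G: "simple_graph V E" and v: "v \<in> V"
    and H: "has_Ks3_minor s (neighbours V E v) (induced_edges E (neighbours V E v))"
  shows "has_Ks3_minor (Suc s) V E"
proof -
  define N where "N = neighbours V E v"
  have vN: "v \<notin> N" using simple_graphD[OF G] unfolding N_def neighbours_def by blast
  have NV: "N \<subseteq> V" unfolding N_def by (rule neighbours_subset)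
  from H obtain W F A B where WF: "minor_of N (induced_edges E N) W F"
    and W: "W = A \<union> B" "A \<inter> B = {}" "finite A" "card A = s" "card B = 3"
    and F: "\<forall>x y. F x y \<longleftrightarrow> (x \<in> A \<and> y \<in> B) \<or> (x \<in> B \<and> y \<in> A)"
    unfolding has_Ks3_minor_def is_Ks3_def N_def by blast
  have GN: "simple_graph N (induced_edges E N)" by (rule simple_graph_induced[OF G NV])
  have WN: "W \<subseteq> N" using minor_of_simple_graph[OF WF GN] by blast
  have "add_apex v N (induced_edges E N) = induced_edges E (insert v N)"
    using simple_graphD[OF G] unfolding N_def neighbours_def induced_edges_def add_apex_def
    by (auto simp: fun_eq_iff)
  then have "minor_of (insert v N) (induced_edges E (insert v N)) (insert v W) (add_apex v W F)"
    using minor_of_add_apex[OF WF GN vN] by simp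
  moreover have "minor_of V E (insert v N) (induced_edges E (insert v N))"
    using v NV by (intro minor_of_induced[OF minor_of.refl G]) auto
  ultimately have "minor_of V E (insert v W) (add_apex v W F)" by (rule minor_of_trans)
  then have "minor_of V E (insert v W) (\<lambda>x y. (x \<in> insert v A \<and> y \<in> B) \<or> (x \<in> B \<and> y \<in> insert v A))"
    by (rule minor_of_delete_edges[OF _ G]) (use F W in \<open>auto simp: add_apex_def\<close>)
  moreover have "is_Ks3 (Suc s) (insert v W) (\<lambda>x y. (x \<in> insert v A \<and> y \<in> B) \<or> (x \<in> B \<and> y \<in> insert v A))"
  proof -
    have "v \<notin> A" "v \<notin> B" using W(1) WN vN by blast+
    then show ?thesis
      unfolding is_Ks3_def using W by (intro exI[of _ "insert v A"] exI[of _ B]) auto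
  qed
  ultimately show ?thesis unfolding has_Ks3_minor_def by blast
qed

section \<open>Mader's bound on the number of edges\<close>

definition degree_sum :: "'a set \<Rightarrow> ('a \<Rightarrow> 'a \<Rightarrow> bool) \<Rightarrow> nat" where
  "degree_sum V E = (\<Sum>x\<in>V. Defs.degree V E x)"

lemma degree_sum_eq_card_arcs:
  assumes "simple_graph V E"
  shows "degree_sum V E = card {(x, y). E x y}"
proof -
  have "(SIGMA x:V. neighbours V E x) = {(x, y). E x y}"
    using simple_graphD[OF assms] unfolding neighbours_def by auto
  moreover have "finite V" by (rule simple_graph_finite[OF assms])
  ultimately show ?thesis
    unfolding degree_sum_def degree_eq_card_neighbours
    by (metis card_SigmaI finite_subset neighbours_subset)
qed

lemma degree_sum_le_arcs_avoiding:
  assumes G: "simple_graph W F"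
  shows "degree_sum W F \<le> card {(x, y). F x y \<and> x \<noteq> b \<and> y \<noteq> b} + 2 * Defs.degree W F b"
proof -
  define kept where "kept = {(x, y). F x y \<and> x \<noteq> b \<and> y \<noteq> b}"
  define Nb where "Nb = neighbours W F b"
  have finNb: "finite Nb" unfolding Nb_def by (rule finite_neighbours[OF G])
  have "kept \<subseteq> W \<times> W" unfolding kept_def by (auto dest: simple_graph_edge_in[OF G])
  then have finkept: "finite kept" using finite_subset simple_graph_finite[OF G] by blast
  have "(x, y) \<in> kept \<union> (Pair b ` Nb \<union> (\<lambda>z. (z, b)) ` Nb)" if "F x y" for x y
  proof -
    have "x \<in> W" "y \<in> W" "F y x" using simple_graphD[OF G that] by blast+
    then show ?thesis using that unfolding kept_def Nb_def neighbours_def by auto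
  qed
  then have "{(x, y). F x y} \<subseteq> kept \<union> (Pair b ` Nb \<union> (\<lambda>z. (z, b)) ` Nb)" by auto
  then have "card {(x, y). F x y} \<le> card (kept \<union> (Pair b ` Nb \<union> (\<lambda>z. (z, b)) ` Nb))"
    by (rule card_mono[rotated]) (simp add: finNb finkept)
  moreover have "card (kept \<union> (Pair b ` Nb \<union> (\<lambda>z. (z, b)) ` Nb))
      \<le> card kept + card (Pair b ` Nb \<union> (\<lambda>z. (z, b)) ` Nb)"
    by (rule card_Un_le)
  moreover have "card (Pair b ` Nb \<union> (\<lambda>z. (z, b)) ` Nb) \<le> card (Pair b ` Nb) + card ((\<lambda>z. (z, b)) ` Nb)"
    by (rule card_Un_le)
  moreover have "card (Pair b ` Nb) \<le> card Nb" "card ((\<lambda>z. (z, b)) ` Nb) \<le> card Nb"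
    by (rule card_image_le[OF finNb])+
  ultimately show ?thesis
    unfolding degree_sum_eq_card_arcs[OF G] degree_eq_card_neighbours kept_def Nb_def by linarith
qed

text \<open>Contracting \<open>ab\<close> keeps the arcs avoiding \<open>b\<close> and redirects to \<open>a\<close> the edges from \<open>b\<close>
  to vertices outside the closed neighbourhood of \<open>a\<close>.\<close>
lemma arcs_avoiding_le_degree_sum_contract_edge:
  assumes G: "simple_graph W F" and ab: "F a b"
  shows "card {(x, y). F x y \<and> x \<noteq> b \<and> y \<noteq> b} + 2 * card (neighbours W F b - neighbours W F a - {a})
           \<le> degree_sum (W - {b}) (contract_edge F a b)"
proof -
  define Z where "Z = neighbours W F b - neighbours W F a - {a}"
  define kept where "kept = {(x, y). F x y \<and> x \<noteq> b \<and> y \<noteq> b}"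
  define new where "new = Pair a ` Z \<union> (\<lambda>z. (z, a)) ` Z"
  have fin: "finite W" by (rule simple_graph_finite[OF G])
  have finZ: "finite Z" unfolding Z_def using finite_neighbours[OF G] by simp
  have "kept \<subseteq> W \<times> W" unfolding kept_def by (auto dest: simple_graph_edge_in[OF G])
  then have finkept: "finite kept" using finite_subset fin by blast
  have G': "simple_graph (W - {b}) (contract_edge F a b)"
    using minor_of_simple_graph[OF minor_of_contract[OF minor_of.refl[of W F] ab] G] by blast
  have "card (Pair a ` Z) = card Z" "card ((\<lambda>z. (z, a)) ` Z) = card Z"
    by (simp_all add: card_image inj_on_def)
  moreover have "Pair a ` Z \<inter> (\<lambda>z. (z, a)) ` Z = {}" unfolding Z_def by auto
  ultimately have "card new = 2 * card Z"
    unfolding new_def using finZ by (simp add: card_Un_disjoint)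
  moreover have "kept \<inter> new = {}"
    unfolding kept_def new_def Z_def neighbours_def by (auto dest: simple_graph_sym[OF G])
  ultimately have "card kept + 2 * card Z = card (kept \<union> new)"
    using finkept finZ unfolding new_def by (simp add: card_Un_disjoint)
  also have "\<dots> \<le> degree_sum (W - {b}) (contract_edge F a b)"
    unfolding degree_sum_eq_card_arcs[OF G']
  proof (rule card_mono)
    have "{(x, y). contract_edge F a b x y} \<subseteq> W \<times> W" by (auto dest: simple_graph_edge_in[OF G'])
    then show "finite {(x, y). contract_edge F a b x y}" using finite_subset fin by blast
    show "kept \<union> new \<subseteq> {(x, y). contract_edge F a b x y}"
      using ab unfolding kept_def new_def Z_def neighbours_def contract_edge_def
      by (auto dest: simple_graph_sym[OF G] simple_graph_irrefl[OF G])
  qed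
  finally show ?thesis unfolding kept_def Z_def .
qed

lemma degree_sum_contract_edge:
  assumes G: "simple_graph W F" and ab: "F a b"
  shows "degree_sum W F \<le> degree_sum (W - {b}) (contract_edge F a b)
           + 2 + 2 * card (neighbours W F a \<inter> neighbours W F b)"
proof -
  define Nb where "Nb = neighbours W F b"
  define Z where "Z = Nb - neighbours W F a - {a}"
  have fin: "finite Nb" unfolding Nb_def by (rule finite_neighbours[OF G])
  have "Nb \<subseteq> (Z \<union> (neighbours W F a \<inter> Nb)) \<union> {a}" unfolding Z_def by blast
  then have "card Nb \<le> card ((Z \<union> (neighbours W F a \<inter> Nb)) \<union> {a})"
    by (rule card_mono[rotated]) (simp add: fin Z_def)
  also have "\<dots> \<le> card (Z \<union> (neighbours W F a \<inter> Nb)) + card {a}"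
    by (rule card_Un_le)
  also have "\<dots> \<le> card Z + card (neighbours W F a \<inter> Nb) + 1"
    using card_Un_le[of Z "neighbours W F a \<inter> Nb"] by simp
  finally have "card Nb \<le> card Z + card (neighbours W F a \<inter> Nb) + 1" .
  then show ?thesis
    using degree_sum_le_arcs_avoiding[OF G, of b] arcs_avoiding_le_degree_sum_contract_edge[OF G ab]
    unfolding degree_eq_card_neighbours Nb_def Z_def by linarith
qed

text \<open>A minor of minimum order with at least \<open>c\<close> edges per vertex: contracting an edge with
  fewer than \<open>c\<close> common neighbours would lose at most \<open>c\<close> edges and give a smaller one.\<close>
lemma dense_minor_with_many_common_neighbours:
  assumes G: "simple_graph V E" and c: "1 \<le> c"
    and dense: "2 * c * card V \<le> degree_sum V E" "0 < degree_sum V E"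
  obtains W F where "minor_of V E W F" "0 < degree_sum W F"
    "\<And>a b. F a b \<Longrightarrow> c \<le> card (neighbours W F a \<inter> neighbours W F b)"
proof -
  define P where "P k \<longleftrightarrow> (\<exists>W F. minor_of V E W F \<and> card W = k \<and>
      2 * c * k \<le> degree_sum W F \<and> 0 < degree_sum W F)" for k
  have "P (card V)" using dense minor_of.refl unfolding P_def by blast
  then obtain k where "P k" and least: "\<And>k'. k' < k \<Longrightarrow> \<not> P k'"
    using exists_least_iff[of P] by blast
  then obtain W F where WF: "minor_of V E W F" and k: "card W = k"
    and D: "2 * c * k \<le> degree_sum W F" "0 < degree_sum W F"
    unfolding P_def by blast
  have GW: "simple_graph W F" using minor_of_simple_graph[OF WF G] by blast
  have "c \<le> card (neighbours W F a \<inter> neighbours W F b)" if ab: "F a b" for a b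
  proof (rule ccontr)
    assume few: "\<not> ?thesis"
    have "a \<in> W" "b \<in> W" "a \<noteq> b" using simple_graphD[OF GW ab] by blast+
    then have "card {a, b} \<le> k" unfolding k[symmetric]
      by (intro card_mono simple_graph_finite[OF GW]) blast
    then have k2: "2 \<le> k" using \<open>a \<noteq> b\<close> by simp
    have cardW': "card (W - {b}) = k - 1" using \<open>b \<in> W\<close> k by simp
    have "2 * c * k = 2 * c * (k - 1) + 2 * c" using k2 by (cases k) (simp_all add: algebra_simps)
    then have D': "2 * c * (k - 1) \<le> degree_sum (W - {b}) (contract_edge F a b)"
      using degree_sum_contract_edge[OF GW ab] few D(1) by linarith
    moreover have "2 * c * 1 \<le> 2 * c * (k - 1)" using k2 by (intro mult_le_mono2) simp
    ultimately have "0 < degree_sum (W - {b}) (contract_edge F a b)" using c by linarith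
    with D' have "P (k - 1)"
      unfolding P_def using minor_of_contract[OF WF ab] cardW' by blast
    then show False using least k2 by simp
  qed
  then show ?thesis using that WF D(2) by blast
qed

text \<open>Mader's argument: in such a minor the neighbourhood of any non-isolated vertex has minimum
  degree at least \<open>c\<close>, hence a \<open>K\<^sub>s\<^sub>,\<^sub>3\<close> minor, which the vertex extends to \<open>K\<^sub>s\<^sub>+\<^sub>1\<^sub>,\<^sub>3\<close>.\<close>
lemma degree_sum_bound_if_no_Ks3_minor:
  fixes V :: "'a set"
  assumes min_degree: "\<And>(N :: 'a set) G. simple_graph N G \<Longrightarrow> N \<noteq> {} \<Longrightarrow>
      (\<forall>x\<in>N. c \<le> Defs.degree N G x) \<Longrightarrow> has_Ks3_minor s N G"
    and c: "1 \<le> c" and G: "simple_graph V E" and no: "\<not> has_Ks3_minor (Suc s) V E"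
  shows "degree_sum V E < 2 * c * card V \<or> degree_sum V E = 0"
proof (rule ccontr)
  assume "\<not> ?thesis"
  then have dense: "2 * c * card V \<le> degree_sum V E" "0 < degree_sum V E" by simp_all
  obtain W F where WF: "minor_of V E W F" and D: "0 < degree_sum W F"
    and common: "\<And>a b. F a b \<Longrightarrow> c \<le> card (neighbours W F a \<inter> neighbours W F b)"
    using dense_minor_with_many_common_neighbours[OF G c dense] by blast
  have GW: "simple_graph W F" using minor_of_simple_graph[OF WF G] by blast
  have "{(x, y). F x y} \<noteq> {}" using D unfolding degree_sum_eq_card_arcs[OF GW] by (intro notI) simp
  then obtain a b where ab: "F a b" by blast
  define N where "N = neighbours W F a"
  have "has_Ks3_minor s N (induced_edges F N)"
  proof (rule min_degree)
    show "simple_graph N (induced_edges F N)"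
      unfolding N_def by (rule simple_graph_induced[OF GW neighbours_subset])
    show "N \<noteq> {}" using ab simple_graphD[OF GW ab] unfolding N_def neighbours_def by blast
    show "\<forall>x\<in>N. c \<le> Defs.degree N (induced_edges F N) x"
    proof
      fix x assume "x \<in> N"
      then have "neighbours N (induced_edges F N) x = neighbours W F a \<inter> neighbours W F x"
        unfolding N_def neighbours_def induced_edges_def by auto
      moreover have "F a x" using \<open>x \<in> N\<close> unfolding N_def neighbours_def by blast
      ultimately show "c \<le> Defs.degree N (induced_edges F N) x"
        unfolding degree_eq_card_neighbours using common by simp
    qed
  qed
  moreover have "a \<in> W" using simple_graphD[OF GW ab] by blast
  ultimately have "has_Ks3_minor (Suc s) W F"
    unfolding N_def by (rule has_Ks3_minor_Suc_if_neighbourhood[OF GW, rotated])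
  then show False using no minor_of_trans[OF _ WF] unfolding has_Ks3_minor_def by blast
qed

lemma has_K23_minor_if_min_degree_ge_6:
  assumes G: "simple_graph N E" and "N \<noteq> {}" and min_degree: "\<forall>x\<in>N. 6 \<le> Defs.degree N E x"
  shows "has_Ks3_minor 2 N E"
proof (rule ccontr)
  assume "\<not> has_Ks3_minor 2 N E"
  then have no: "\<not> has_Ks3_minor (Suc 1) N E" by (simp add: numeral_2_eq_2)
  have K13: "has_Ks3_minor 1 M H"
    if M: "simple_graph M H" "M \<noteq> {}" "\<forall>x\<in>M. 3 \<le> Defs.degree M H x" for M :: "'a set" and H
  proof -
    obtain x where "x \<in> M" using M(2) by blast
    with M show ?thesis by (intro has_K13_minor) auto
  qed
  have "degree_sum N E < 2 * 3 * card N \<or> degree_sum N E = 0"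
    by (rule degree_sum_bound_if_no_Ks3_minor[OF K13 _ G no]) simp_all
  moreover have "6 * card N \<le> degree_sum N E"
    unfolding degree_sum_def using sum_mono[of N "\<lambda>_. 6::nat" "Defs.degree N E"] min_degree
    by (simp add: mult.commute)
  moreover have "0 < card N" using assms(2) simple_graph_finite[OF G] by (simp add: card_gt_0_iff)
  ultimately show False by linarith
qed

lemma degree_sum_lt_if_no_K33_minor:
  assumes G: "simple_graph V E" and "\<not> has_K33_minor V E" and "V \<noteq> {}"
  shows "degree_sum V E < 12 * card V"
proof -
  have "\<not> has_Ks3_minor 3 V E" using assms(2) has_K33_minor_if_has_Ks3_minor by blast
  then have "\<not> has_Ks3_minor (Suc 2) V E" by simp
  then have "degree_sum V E < 2 * 6 * card V \<or> degree_sum V E = 0"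
    by (intro degree_sum_bound_if_no_Ks3_minor[OF has_K23_minor_if_min_degree_ge_6 _ G]) simp_all
  moreover have "0 < card V" using assms(3) simple_graph_finite[OF G] by (simp add: card_gt_0_iff)
  ultimately show ?thesis by auto
qed

section \<open>Vertices of large degree\<close>

lemma card_common_neighbours_le_2:
  assumes G: "simple_graph V E" and no: "\<not> has_K33_minor V E"
    and abc: "a \<in> V" "b \<in> V" "c \<in> V" "a \<noteq> b" "b \<noteq> c" "a \<noteq> c"
  shows "card {x \<in> V. E a x \<and> E b x \<and> E c x} \<le> 2"
proof (rule ccontr)
  assume "\<not> ?thesis"
  then obtain B where B: "B \<subseteq> {x \<in> V. E a x \<and> E b x \<and> E c x}" "card B = 3"
    using obtain_subset_with_card_n[of 3 "{x \<in> V. E a x \<and> E b x \<and> E c x}"] by auto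
  have "{a, b, c} \<inter> B = {}" using B(1) by (auto dest: simple_graph_irrefl[OF G])
  then have "has_Ks3_minor 3 V E"
    using abc B by (intro has_Ks3_minor_if_complete_bipartite_subgraph[OF G, of "{a, b, c}" B]) auto
  then show False using no has_K33_minor_if_has_Ks3_minor by blast
qed

lemma three_degrees_le:
  assumes G: "simple_graph V E" and no: "\<not> has_K33_minor V E"
    and abc: "a \<in> V" "b \<in> V" "c \<in> V" "a \<noteq> b" "b \<noteq> c" "a \<noteq> c"
  shows "Defs.degree V E a + Defs.degree V E b + Defs.degree V E c \<le> 2 * card V + 2"
proof -
  have fin: "finite V" by (rule simple_graph_finite[OF G])
  define C where "C = {x \<in> V. E a x \<and> E b x \<and> E c x}"
  have count: "card {x \<in> V. P x} = (\<Sum>x\<in>V. if P x then 1 else 0)" for P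
    using sum.inter_filter[OF fin, of "\<lambda>_. 1::nat" P] by simp
  have "Defs.degree V E a + Defs.degree V E b + Defs.degree V E c =
      (\<Sum>x\<in>V. (if E a x then 1 else 0) + (if E b x then 1 else 0) + (if E c x then 1 else 0))"
    unfolding Defs.degree_def count by (simp add: sum.distrib)
  also have "\<dots> \<le> (\<Sum>x\<in>V. 2 + (if x \<in> C then 1 else 0))"
    by (intro sum_mono) (auto simp: C_def)
  also have "\<dots> = 2 * card V + card C"
    unfolding sum.distrib C_def count[symmetric] by simp
  finally show ?thesis
    using card_common_neighbours_le_2[OF assms] unfolding C_def by linarith
qed

lemma card_high_degree_le_2:
  assumes G: "simple_graph V E" and no: "\<not> has_K33_minor V E"
  shows "card {w \<in> V. 2 * card V + 2 < 3 * Defs.degree V E w} \<le> 2"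
proof (rule ccontr)
  assume "\<not> ?thesis"
  then obtain S where S: "S \<subseteq> {w \<in> V. 2 * card V + 2 < 3 * Defs.degree V E w}" "card S = 3"
    using obtain_subset_with_card_n[of 3 "{w \<in> V. 2 * card V + 2 < 3 * Defs.degree V E w}"] by auto
  then obtain a b c where abc: "S = {a, b, c}" "a \<noteq> b" "b \<noteq> c" "a \<noteq> c"
    unfolding card_3_iff by blast
  have "a \<in> V" "b \<in> V" "c \<in> V" using S(1) abc(1) by auto
  from three_degrees_le[OF G no this abc(2-4)] show False
    using S(1) abc(1) by auto
qed

section \<open>Bounding the signless Laplacian spectrum\<close>

text \<open>A positive \<open>g\<close> with \<open>Q g \<le> M g\<close> bounds every eigenvalue: evaluate the eigenvalue equation
  at a vertex maximising \<open>\<bar>x v\<bar> / g v\<close>.\<close>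
lemma Q_eigenvalue_le_if_supersolution:
  assumes G: "simple_graph V E" and pos: "\<forall>v\<in>V. 0 < g v"
    and super: "\<forall>v\<in>V. signless_laplacian_apply V E g v \<le> M * g v"
    and "Q_eigenvalue V E mu"
  shows "mu \<le> M"
proof -
  from assms(4) obtain x where x0: "\<exists>v\<in>V. x v \<noteq> 0"
    and eig: "\<forall>v\<in>V. signless_laplacian_apply V E x v = mu * x v"
    unfolding Q_eigenvalue_def by blast
  have fin: "finite V" by (rule simple_graph_finite[OF G])
  define r where "r = Max ((\<lambda>v. \<bar>x v\<bar> / g v) ` V)"
  have "r \<in> (\<lambda>v. \<bar>x v\<bar> / g v) ` V" unfolding r_def using fin x0 by (intro Max_in) auto
  then obtain v0 where v0: "v0 \<in> V" "r = \<bar>x v0\<bar> / g v0" by blast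
  have le_r: "\<bar>x u\<bar> \<le> r * g u" if "u \<in> V" for u
  proof -
    have "\<bar>x u\<bar> / g u \<le> r" unfolding r_def using fin that by (intro Max_ge) auto
    then show ?thesis using pos that by (simp add: divide_le_eq)
  qed
  have r_pos: "0 < r"
  proof -
    obtain w where "w \<in> V" "x w \<noteq> 0" using x0 by blast
    then have "0 < r * g w" using le_r[of w] by linarith
    moreover have "0 < g w" using pos \<open>w \<in> V\<close> by blast
    ultimately show ?thesis by (simp add: zero_less_mult_iff)
  qed
  have x_v0: "\<bar>x v0\<bar> = r * g v0" using v0 pos by force
  define N where "N = {u \<in> V. E v0 u}"
  have "\<bar>mu\<bar> * \<bar>x v0\<bar> = \<bar>real (Defs.degree V E v0) * x v0 + (\<Sum>u\<in>N. x u)\<bar>"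
    using eig v0(1) unfolding signless_laplacian_apply_def N_def by (simp add: abs_mult)
  also have "\<dots> \<le> real (Defs.degree V E v0) * \<bar>x v0\<bar> + (\<Sum>u\<in>N. \<bar>x u\<bar>)"
    by (rule order_trans[OF abs_triangle_ineq]) (simp add: abs_mult sum_abs)
  also have "\<dots> \<le> real (Defs.degree V E v0) * (r * g v0) + (\<Sum>u\<in>N. r * g u)"
    using le_r x_v0 by (intro add_mono sum_mono) (auto simp: N_def)
  also have "\<dots> = r * signless_laplacian_apply V E g v0"
    unfolding signless_laplacian_apply_def N_def by (simp add: sum_distrib_left algebra_simps)
  also have "\<dots> \<le> r * (M * g v0)" using super v0(1) r_pos by simp
  finally have "\<bar>mu\<bar> * (r * g v0) \<le> M * (r * g v0)" unfolding x_v0 by (simp add: algebra_simps)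
  then have "\<bar>mu\<bar> \<le> M" using r_pos pos v0(1) by (simp add: mult_le_cancel_right zero_less_mult_iff)
  then show ?thesis by simp
qed

definition signless_laplacian_entry :: "'a set \<Rightarrow> ('a \<Rightarrow> 'a \<Rightarrow> bool) \<Rightarrow> 'a \<Rightarrow> 'a \<Rightarrow> real" where
  "signless_laplacian_entry V E a b =
     (if a = b then real (Defs.degree V E a) else 0) + (if E a b then 1 else 0)"

definition signless_laplacian_mat :: "'a set \<Rightarrow> ('a \<Rightarrow> 'a \<Rightarrow> bool) \<Rightarrow> (nat \<Rightarrow> 'a) \<Rightarrow> real mat" where
  "signless_laplacian_mat V E f =
     mat (card V) (card V) (\<lambda>(i, j). signless_laplacian_entry V E (f i) (f j))"

lemma signless_laplacian_apply_eq_sum: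
  assumes "finite V" "a \<in> V"
  shows "signless_laplacian_apply V E x a = (\<Sum>b\<in>V. signless_laplacian_entry V E a b * x b)"
proof -
  have "(\<Sum>b\<in>V. signless_laplacian_entry V E a b * x b) =
      (\<Sum>b\<in>V. if a = b then real (Defs.degree V E a) * x b else 0) + (\<Sum>b\<in>V. if E a b then x b else 0)"
    unfolding signless_laplacian_entry_def sum.distrib[symmetric]
    by (rule sum.cong) (auto simp: algebra_simps)
  also have "\<dots> = real (Defs.degree V E a) * x a + (\<Sum>b\<in>{u \<in> V. E a u}. x b)"
    using assms sum.inter_filter[OF assms(1), of x "E a"] by simp
  finally show ?thesis unfolding signless_laplacian_apply_def by simp
qed

lemma signless_laplacian_entry_sym:
  "simple_graph V E \<Longrightarrow> signless_laplacian_entry V E a b = signless_laplacian_entry V E b a"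
  unfolding signless_laplacian_entry_def by (auto dest: simple_graph_sym)

lemma signless_laplacian_mat_mult_vec:
  assumes "finite V" "bij_betw f {0..<card V} V" "i < card V"
  shows "(signless_laplacian_mat V E f *\<^sub>v vec (card V) (\<lambda>j. x (f j))) $ i
           = signless_laplacian_apply V E x (f i)"
proof -
  have "(signless_laplacian_mat V E f *\<^sub>v vec (card V) (\<lambda>j. x (f j))) $ i
      = (\<Sum>j\<in>{0..<card V}. signless_laplacian_entry V E (f i) (f j) * x (f j))"
    using assms(3) unfolding signless_laplacian_mat_def by (simp add: scalar_prod_def)
  also have "\<dots> = (\<Sum>b\<in>V. signless_laplacian_entry V E (f i) b * x b)"
    using sum.reindex_bij_betw[OF assms(2)] by simp
  also have "\<dots> = signless_laplacian_apply V E x (f i)"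
    using assms bij_betwE by (metis signless_laplacian_apply_eq_sum atLeastLessThan_iff zero_le)
  finally show ?thesis .
qed

lemma eigenvalue_signless_laplacian_mat:
  assumes G: "simple_graph V E" and f: "bij_betw f {0..<card V} V" and "Q_eigenvalue V E mu"
  shows "eigenvalue (signless_laplacian_mat V E f) mu"
proof -
  from assms(3) obtain x where x0: "\<exists>v\<in>V. x v \<noteq> 0"
    and eig: "\<forall>v\<in>V. signless_laplacian_apply V E x v = mu * x v"
    unfolding Q_eigenvalue_def by blast
  define w where "w = vec (card V) (\<lambda>i. x (f i))"
  have fi: "f i \<in> V" if "i < card V" for i using f that bij_betwE by fastforce
  have "w \<noteq> 0\<^sub>v (card V)"
  proof
    assume "w = 0\<^sub>v (card V)"
    moreover obtain a where "a \<in> V" "x a \<noteq> 0" using x0 by blast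
    moreover obtain i where "i < card V" "f i = a"
      using f \<open>a \<in> V\<close> by (metis atLeastLessThan_iff bij_betw_iff_bijections)
    ultimately show False unfolding w_def by (metis index_vec index_zero_vec(1))
  qed
  moreover have "signless_laplacian_mat V E f *\<^sub>v w = mu \<cdot>\<^sub>v w"
    by (rule eq_vecI)
      (use signless_laplacian_mat_mult_vec[OF simple_graph_finite[OF G] f] eig fi in
        \<open>auto simp: w_def signless_laplacian_mat_def\<close>)
  ultimately have "eigenvector (signless_laplacian_mat V E f) w mu"
    unfolding eigenvector_def w_def signless_laplacian_mat_def by simp
  then show ?thesis unfolding eigenvalue_def by blast
qed

lemma finite_Q_eigenvalues:
  assumes G: "simple_graph V E"
  shows "finite {mu. Q_eigenvalue V E mu}"
proof -
  obtain f where f: "bij_betw f {0..<card V} V"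
    using ex_bij_betw_nat_finite[OF simple_graph_finite[OF G]] by blast
  have "{mu. Q_eigenvalue V E mu} \<subseteq> spectrum (signless_laplacian_mat V E f)"
    unfolding spectrum_def using eigenvalue_signless_laplacian_mat[OF G f] by auto
  moreover have "finite (spectrum (signless_laplacian_mat V E f))"
    by (rule card_finite_spectrum(1)[of _ "card V"]) (simp add: signless_laplacian_mat_def)
  ultimately show ?thesis by (rule finite_subset)
qed

text \<open>\<open>\<lambda> \<Sum>\<^sub>i \<bar>z\<^sub>i\<bar>\<^sup>2\<close> equals \<open>\<Sum>\<^sub>i\<^sub>j c\<^sub>i\<^sub>j z\<^sub>i\<^sup>* z\<^sub>j\<close>, which is its own conjugate because \<open>c\<close> is real symmetric.\<close>
lemma symmetric_eigenvalue_real: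
  fixes c :: "nat \<Rightarrow> nat \<Rightarrow> real" and z :: "nat \<Rightarrow> complex"
  assumes sym: "\<And>i j. c i j = c j i"
    and eig: "\<And>i. i < n \<Longrightarrow> (\<Sum>j<n. complex_of_real (c i j) * z j) = l * z i"
    and "i0 < n" "z i0 \<noteq> 0"
  shows "Im l = 0"
proof -
  define S where "S = (\<Sum>i<n. \<Sum>j<n. complex_of_real (c i j) * (cnj (z i) * z j))"
  define T where "T = (\<Sum>i<n. (Re (z i))\<^sup>2 + (Im (z i))\<^sup>2)"
  have "S = (\<Sum>i<n. cnj (z i) * (\<Sum>j<n. complex_of_real (c i j) * z j))"
    unfolding S_def by (simp add: sum_distrib_left algebra_simps)
  also have "\<dots> = (\<Sum>i<n. l * (z i * cnj (z i)))"
    using eig by (intro sum.cong) (simp_all add: algebra_simps)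
  also have "\<dots> = l * complex_of_real T"
    unfolding T_def complex_mult_cnj of_real_sum by (simp add: sum.distrib distrib_left sum_distrib_left)
  finally have S_eq: "S = l * complex_of_real T" .
  have "cnj S = (\<Sum>i<n. \<Sum>j<n. complex_of_real (c i j) * (z i * cnj (z j)))"
    unfolding S_def cnj_sum by (simp add: mult.commute)
  also have "\<dots> = (\<Sum>j<n. \<Sum>i<n. complex_of_real (c j i) * (cnj (z j) * z i))"
    by (subst sum.swap) (simp add: sym mult.commute)
  also have "\<dots> = S" unfolding S_def ..
  finally have "cnj S = S" .
  then have "Im S = 0" using complex_cnj_cancel_iff complex_eq_iff by force
  moreover have "0 < T"
  proof -
    have "0 < (Re (z i0))\<^sup>2 + (Im (z i0))\<^sup>2"
      using assms(4) complex_eq_iff by (auto simp: sum_power2_gt_zero_iff)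
    also have "\<dots> \<le> T" unfolding T_def using assms(3) by (intro member_le_sum) auto
    finally show ?thesis .
  qed
  ultimately show ?thesis using S_eq by simp
qed

lemma Q_eigenvalue_if_real_eigenvector:
  assumes G: "simple_graph V E" and f: "bij_betw f {0..<card V} V"
    and eig: "\<And>i. i < card V \<Longrightarrow>
      (\<Sum>j<card V. signless_laplacian_entry V E (f i) (f j) * y j) = mu * y i"
    and "i0 < card V" "y i0 \<noteq> 0"
  shows "Q_eigenvalue V E mu"
proof -
  define x where "x b = y (inv_into {0..<card V} f b)" for b
  have inj: "inj_on f {0..<card V}" using f unfolding bij_betw_def by blast
  have x_f: "x (f j) = y j" if "j < card V" for j
    unfolding x_def using inv_into_f_f[OF inj] that by simp
  have "signless_laplacian_apply V E x a = mu * x a" if "a \<in> V" for a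
  proof -
    obtain i where i: "i < card V" "a = f i"
      using f \<open>a \<in> V\<close> by (metis atLeastLessThan_iff bij_betw_iff_bijections)
    have "signless_laplacian_apply V E x a = (\<Sum>b\<in>V. signless_laplacian_entry V E a b * x b)"
      by (rule signless_laplacian_apply_eq_sum[OF simple_graph_finite[OF G] that])
    also have "\<dots> = (\<Sum>j<card V. signless_laplacian_entry V E (f i) (f j) * y j)"
      using sum.reindex_bij_betw[OF f, of "\<lambda>b. signless_laplacian_entry V E a b * x b"] i x_f
      by (simp add: atLeast0LessThan)
    also have "\<dots> = mu * x a" using eig i x_f by simp
    finally show ?thesis .
  qed
  moreover have "f i0 \<in> V" "x (f i0) \<noteq> 0"
    using assms(4,5) x_f f bij_betwE by fastforce+
  ultimately show ?thesis unfolding Q_eigenvalue_def by blast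
qed

lemma ex_Q_eigenvalue:
  assumes G: "simple_graph V E" and "V \<noteq> {}"
  shows "\<exists>mu. Q_eigenvalue V E mu"
proof -
  define n where "n = card V"
  have "0 < n" using assms simple_graph_finite[OF G] unfolding n_def by (simp add: card_gt_0_iff)
  obtain f where f: "bij_betw f {0..<n} V"
    using ex_bij_betw_nat_finite[OF simple_graph_finite[OF G]] unfolding n_def by blast
  define C where "C = map_mat complex_of_real (signless_laplacian_mat V E f)"
  have C: "C \<in> carrier_mat n n" unfolding C_def signless_laplacian_mat_def n_def by simp
  obtain l where "l \<in> spectrum C" using spectrum_non_empty[OF C \<open>0 < n\<close>] by blast
  then obtain v where v: "v \<in> carrier_vec n" "v \<noteq> 0\<^sub>v n" "C *\<^sub>v v = l \<cdot>\<^sub>v v"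
    unfolding spectrum_def eigenvalue_def eigenvector_def using C by auto
  define c where "c i j = signless_laplacian_entry V E (f i) (f j)" for i j
  have eig: "(\<Sum>j<n. complex_of_real (c i j) * v $ j) = l * v $ i" if "i < n" for i
  proof -
    have "(C *\<^sub>v v) $ i = (\<Sum>j<n. complex_of_real (c i j) * v $ j)"
      using that v(1) unfolding C_def c_def signless_laplacian_mat_def n_def
      by (simp add: scalar_prod_def atLeast0LessThan)
    then show ?thesis using v that by simp
  qed
  obtain i0 where i0: "i0 < n" "v $ i0 \<noteq> 0" using v(1,2) by (metis carrier_vecD eq_vecI index_zero_vec)
  have "Im l = 0"
    by (rule symmetric_eigenvalue_real[of c, OF _ eig i0]) (simp add: c_def signless_laplacian_entry_sym[OF G])
  then have Re_eig: "(\<Sum>j<n. c i j * Re (v $ j)) = Re l * Re (v $ i)"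
    and Im_eig: "(\<Sum>j<n. c i j * Im (v $ j)) = Re l * Im (v $ i)" if "i < n" for i
    using arg_cong[OF eig[OF that], of Re] arg_cong[OF eig[OF that], of Im] by (simp_all add: Re_sum Im_sum)
  show ?thesis
  proof (cases "Re (v $ i0) = 0")
    case False
    then have "Q_eigenvalue V E (Re l)"
      using Re_eig i0 f unfolding c_def n_def by (intro Q_eigenvalue_if_real_eigenvector[OF G]) auto
    then show ?thesis ..
  next
    case True
    then have "Im (v $ i0) \<noteq> 0" using i0(2) complex_eq_iff by auto
    then have "Q_eigenvalue V E (Re l)"
      using Im_eig i0 f unfolding c_def n_def by (intro Q_eigenvalue_if_real_eigenvector[OF G]) auto
    then show ?thesis ..
  qed
qed

lemma q_index_le_if_supersolution:
  assumes "simple_graph V E" "V \<noteq> {}" "\<forall>v\<in>V. 0 < g v"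
    and "\<forall>v\<in>V. signless_laplacian_apply V E g v \<le> M * g v"
  shows "q_index V E \<le> M"
  unfolding q_index_def
  using finite_Q_eigenvalues[OF assms(1)] ex_Q_eigenvalue[OF assms(1,2)]
    Q_eigenvalue_le_if_supersolution[OF assms(1,3,4)]
  by (intro Max.boundedI) auto

section \<open>The neighbourhood inequality\<close>

lemma inverse_add_inverse_le:
  fixes a b c :: real
  assumes "0 < c" "c \<le> a" "c \<le> b"
  shows "1 / a + 1 / b \<le> 1 / c + 1 / (a + b - c)"
proof -
  have "c * (a + b - c) \<le> a * b"
    using mult_nonneg_nonneg[of "a - c" "b - c"] assms by (simp add: algebra_simps)
  then have "(a + b) / (a * b) \<le> (a + b) / (c * (a + b - c))"
    using assms by (intro divide_left_mono) auto
  then show ?thesis using assms by (simp add: field_simps)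
qed

lemma inverse_diff_le:
  fixes m d t :: real
  assumes "0 \<le> d" "d \<le> t" "t < m"
  shows "1 / (m - d) \<le> 1 / m + d / (m * (m - t))"
proof -
  have "1 / (m - d) = 1 / m + d / (m * (m - d))"
    using assms by (simp add: field_simps)
  also have "d / (m * (m - d)) \<le> d / (m * (m - t))"
    using assms by (intro divide_left_mono mult_left_mono mult_pos_pos) auto
  finally show ?thesis by simp
qed

lemma sum_inverse_low_degrees_le:
  fixes n D :: real and d :: "'b \<Rightarrow> real"
  assumes n: "374 \<le> n" and "finite R" and low: "\<forall>w\<in>R. 0 \<le> d w \<and> d w \<le> (2 * n + 2) / 3"
    and "(\<Sum>w\<in>R. d w) \<le> D" "D < 12 * n"
  shows "(\<Sum>w\<in>R. 1 / (n + 2 - d w)) \<le> real (card R) / (n + 2) + 1 / 10"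
proof -
  define c where "c = 3 / ((n + 2) * (n + 4))"
  have c: "0 \<le> c" unfolding c_def using n by simp
  have "(\<Sum>w\<in>R. 1 / (n + 2 - d w)) \<le> (\<Sum>w\<in>R. 1 / (n + 2) + c * d w)"
  proof (rule sum_mono)
    fix w assume "w \<in> R"
    then have "1 / (n + 2 - d w) \<le> 1 / (n + 2) + d w / ((n + 2) * (n + 2 - (2 * n + 2) / 3))"
      using low n by (intro inverse_diff_le) auto
    then show "1 / (n + 2 - d w) \<le> 1 / (n + 2) + c * d w"
      unfolding c_def by (simp add: field_simps)
  qed
  also have "\<dots> = real (card R) / (n + 2) + c * (\<Sum>w\<in>R. d w)"
    by (simp add: sum.distrib sum_distrib_left)
  also have "c * (\<Sum>w\<in>R. d w) \<le> c * (12 * n)"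
    using assms(4,5) c by (intro mult_left_mono) auto
  also have "c * (12 * n) \<le> 1 / 10"
  proof -
    have "374 * 20 \<le> n * (n - 354)" using n by (intro mult_mono) auto
    then have "360 * n \<le> (n + 2) * (n + 4)" by (simp add: algebra_simps)
    then show ?thesis unfolding c_def using n by (simp add: field_simps)
  qed
  finally show ?thesis by simp
qed

lemma inverse_bound_many_neighbours:
  fixes k m :: real
  assumes m: "376 \<le> m" and k: "7 \<le> k" "3 * k < 2 * m"
  shows "1 / 4 + 1 / (k - 2) \<le> 1 / 2 - k / (5 * m) + 2 / m"
proof -
  have "0 \<le> 2 / m" using m by simp
  moreover have "1 / (k - 2) + k / (5 * m) \<le> 1 / 4"
  proof (cases "k \<le> 20")
    case True
    have "1 / (k - 2) \<le> 1 / 5" using k by (simp add: divide_le_eq)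
    moreover have "k / (5 * m) \<le> 1 / 20" using True m by (simp add: divide_le_eq)
    ultimately show ?thesis by linarith
  next
    case False
    have "1 / (k - 2) \<le> 1 / 18" using False by (simp add: divide_le_eq)
    moreover have "k / (5 * m) \<le> 2 / 15" using k m by (simp add: divide_le_eq)
    ultimately show ?thesis by linarith
  qed
  ultimately show ?thesis by linarith
qed

text \<open>The case of two neighbours of degree above \<open>(2n + 2)/3\<close>; \<open>k\<close> is the degree of the centre.\<close>
lemma two_high_degrees_inverse_le:
  fixes n k d1 d2 :: real
  assumes n: "374 \<le> n" and k: "k \<in> \<nat>"
    and d: "(2 * n + 2) / 3 < d1" "(2 * n + 2) / 3 < d2" "d1 \<le> n - 2" "d2 \<le> n - 2"
    and three: "k + d1 + d2 \<le> 2 * n + 2"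
  shows "1 / (n + 2 - d1) + 1 / (n + 2 - d2) + (k - 2) / (n + 2) + 1 / 10
           \<le> (4 * k + 3 * (n + 2)) / (5 * (n + 2))"
proof -
  define m where "m = n + 2"
  define a1 where "a1 = m - d1"
  define a2 where "a2 = m - d2"
  have m: "376 \<le> m" using n unfolding m_def by simp
  have a: "4 \<le> a1" "4 \<le> a2" using d unfolding a1_def a2_def m_def by auto
  have goal: "(4 * k + 3 * m) / (5 * m) - (k - 2) / m - 1 / 10 = 1 / 2 - k / (5 * m) + 2 / m"
    using m by (simp add: field_simps)
  have "1 / a1 + 1 / a2 \<le> 1 / 2 - k / (5 * m) + 2 / m"
  proof (cases "k \<le> 6")
    case True
    have "1 / a1 \<le> 1 / 4" "1 / a2 \<le> 1 / 4" using a by (simp_all add: divide_le_eq)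
    moreover have "k / (5 * m) \<le> 2 / m" using True m by (simp add: divide_le_eq field_simps)
    ultimately show ?thesis by linarith
  next
    case False
    then have k7: "7 \<le> k" using k by (auto elim!: Nats_cases)
    have "1 / a1 + 1 / a2 \<le> 1 / 4 + 1 / (a1 + a2 - 4)" by (rule inverse_add_inverse_le) (use a in auto)
    also have "1 / (a1 + a2 - 4) \<le> 1 / (k - 2)"
      using three k7 unfolding a1_def a2_def m_def by (intro divide_left_mono) auto
    also have "1 / 4 + 1 / (k - 2) \<le> 1 / 2 - k / (5 * m) + 2 / m"
    proof (rule inverse_bound_many_neighbours[OF m k7])
      have "2 * n + 2 < 3 * d1" "2 * n + 2 < 3 * d2" using d(1,2) by simp_all
      with three show "3 * k < 2 * m" unfolding m_def by (simp add: algebra_simps)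
    qed
    finally show ?thesis by simp
  qed
  then show ?thesis using goal unfolding a1_def a2_def m_def by linarith
qed

lemma sum_inverse_degrees_split_le:
  fixes N :: "'b set" and d :: "'b \<Rightarrow> real" and n D :: real
  assumes n: "374 \<le> n" and fin: "finite N" and d: "\<forall>w\<in>N. 0 \<le> d w"
    and D: "(\<Sum>w\<in>N. d w) \<le> D" "D < 12 * n"
  defines "B \<equiv> {w \<in> N. (2 * n + 2) / 3 < d w}"
  shows "(\<Sum>w\<in>N. 1 / (n + 2 - d w))
           \<le> (real (card N) - real (card B)) / (n + 2) + 1 / 10 + (\<Sum>w\<in>B. 1 / (n + 2 - d w))"
proof -
  have BN: "B \<subseteq> N" unfolding B_def by blast
  have finB: "finite B" using fin BN by (rule finite_subset[rotated])
  have "(\<Sum>w\<in>N - B. 1 / (n + 2 - d w)) \<le> real (card (N - B)) / (n + 2) + 1 / 10"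
  proof (rule sum_inverse_low_degrees_le[OF n _ _ _ D(2)])
    show "(\<Sum>w\<in>N - B. d w) \<le> D"
      using sum_mono2[OF fin, of "N - B" d] d D(1) by auto
  qed (use fin d in \<open>auto simp: B_def\<close>)
  moreover have "real (card (N - B)) / (n + 2) = (real (card N) - real (card B)) / (n + 2)"
    using card_Diff_subset[OF finB BN] card_mono[OF fin BN] by simp
  moreover have "(\<Sum>w\<in>N. 1 / (n + 2 - d w)) = (\<Sum>w\<in>N - B. 1 / (n + 2 - d w)) + (\<Sum>w\<in>B. 1 / (n + 2 - d w))"
    by (rule sum.subset_diff[OF BN fin])
  ultimately show ?thesis by linarith
qed

lemma sum_inverse_neighbour_degrees_le:
  fixes N :: "'b set" and d :: "'b \<Rightarrow> real" and n D :: real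
  assumes n: "374 \<le> n" and fin: "finite N" and k: "real (card N) \<le> n + 2"
    and d: "\<forall>w\<in>N. 0 \<le> d w \<and> d w \<le> n - 2"
    and D: "(\<Sum>w\<in>N. d w) \<le> D" "D < 12 * n"
    and high: "card {w \<in> N. (2 * n + 2) / 3 < d w} \<le> 2"
    and pair: "\<And>b1 b2. b1 \<in> N \<Longrightarrow> b2 \<in> N \<Longrightarrow> b1 \<noteq> b2 \<Longrightarrow> (2 * n + 2) / 3 < d b1 \<Longrightarrow>
      (2 * n + 2) / 3 < d b2 \<Longrightarrow> real (card N) + d b1 + d b2 \<le> 2 * n + 2"
  shows "(\<Sum>w\<in>N. 1 / (n + 2 - d w)) \<le> (4 * real (card N) + 3 * (n + 2)) / (5 * (n + 2))"
proof -
  define B where "B = {w \<in> N. (2 * n + 2) / 3 < d w}"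
  have BN: "B \<subseteq> N" unfolding B_def by blast
  have low: "(\<Sum>w\<in>N. 1 / (n + 2 - d w))
      \<le> (real (card N) - real (card B)) / (n + 2) + 1 / 10 + (\<Sum>w\<in>B. 1 / (n + 2 - d w))"
    unfolding B_def using d by (intro sum_inverse_degrees_split_le[OF n fin _ D]) auto
  have goal: "(4 * k + 3 * (n + 2)) / (5 * (n + 2)) = 4 / 5 * (k / (n + 2)) + 3 / 5" for k
    using n by (simp add: field_simps)
  consider "card B \<le> 1" | "card B = 2" using high unfolding B_def by linarith
  then show ?thesis
  proof cases
    case 1
    have "(\<Sum>w\<in>B. 1 / (n + 2 - d w)) \<le> (\<Sum>w\<in>B. 1 / 4)"
    proof (rule sum_mono)
      fix w assume "w \<in> B"
      then have "d w \<le> n - 2" using BN d by blast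
      then have "4 \<le> n + 2 - d w" by simp
      then show "1 / (n + 2 - d w) \<le> 1 / 4" by (simp add: divide_le_eq)
    qed
    also have "\<dots> \<le> 1 / 4" using 1 by simp
    moreover have "0 \<le> real (card B) / (n + 2)" using n by simp
    ultimately have "(\<Sum>w\<in>B. 1 / (n + 2 - d w)) - real (card B) / (n + 2) \<le> 1 / 4"
      by linarith
    moreover have "real (card N) / (n + 2) \<le> 1" using k n by simp
    ultimately show ?thesis
      unfolding goal using low diff_divide_distrib[of "real (card N)" "real (card B)" "n + 2"]
      by linarith
  next
    case 2
    then obtain b1 b2 where B: "B = {b1, b2}" "b1 \<noteq> b2" unfolding card_2_iff by blast
    then have b: "b1 \<in> N" "b2 \<in> N" "(2 * n + 2) / 3 < d b1" "(2 * n + 2) / 3 < d b2"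
      unfolding B_def by auto
    have "1 / (n + 2 - d b1) + 1 / (n + 2 - d b2) + (real (card N) - 2) / (n + 2) + 1 / 10
        \<le> (4 * real (card N) + 3 * (n + 2)) / (5 * (n + 2))"
      using b d pair[OF b(1,2) B(2) b(3,4)] by (intro two_high_degrees_inverse_le[OF n]) auto
    then show ?thesis using low B 2 by simp
  qed
qed

lemma card_high_degree_neighbours_le_2:
  assumes G: "simple_graph V E" and no: "\<not> has_K33_minor V E"
  shows "card {w \<in> neighbours V E v. (2 * real (card V) + 2) / 3 < real (Defs.degree V E w)} \<le> 2"
proof -
  have "{w \<in> neighbours V E v. (2 * real (card V) + 2) / 3 < real (Defs.degree V E w)}
      \<subseteq> {w \<in> V. 2 * card V + 2 < 3 * Defs.degree V E w}"
  proof
    fix w assume "w \<in> {w \<in> neighbours V E v. (2 * real (card V) + 2) / 3 < real (Defs.degree V E w)}"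
    then have "w \<in> V" "real (2 * card V + 2) < real (3 * Defs.degree V E w)"
      using neighbours_subset[of V E v] by auto
    then show "w \<in> {w \<in> V. 2 * card V + 2 < 3 * Defs.degree V E w}" by (simp only: of_nat_less_iff) simp
  qed
  then have "card {w \<in> neighbours V E v. (2 * real (card V) + 2) / 3 < real (Defs.degree V E w)}
      \<le> card {w \<in> V. 2 * card V + 2 < 3 * Defs.degree V E w}"
    by (rule card_mono[rotated]) (simp add: simple_graph_finite[OF G])
  then show ?thesis using card_high_degree_le_2[OF G no] by linarith
qed

lemma sum_inverse_neighbour_degrees_le_graph:
  assumes G: "simple_graph V E" and no: "\<not> has_K33_minor V E" and n: "374 \<le> card V"
    and deg: "\<forall>w\<in>V. Defs.degree V E w \<le> card V - 2" and v: "v \<in> V"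
  shows "(\<Sum>w\<in>neighbours V E v. 1 / (real (card V) + 2 - real (Defs.degree V E w)))
           \<le> (4 * real (Defs.degree V E v) + 3 * (real (card V) + 2)) / (5 * (real (card V) + 2))"
  unfolding degree_eq_card_neighbours[of V E v]
proof (rule sum_inverse_neighbour_degrees_le[where D = "real (degree_sum V E)"])
  have fin: "finite V" by (rule simple_graph_finite[OF G])
  have NV: "neighbours V E v \<subseteq> V" by (rule neighbours_subset)
  have deg': "real (Defs.degree V E w) \<le> real (card V) - 2" if "w \<in> V" for w
    using deg[rule_format, OF that] n by linarith
  show "finite (neighbours V E v)" by (rule finite_neighbours[OF G])
  show "real (card (neighbours V E v)) \<le> real (card V) + 2"
    using deg'[OF v] unfolding degree_eq_card_neighbours by simp
  show "\<forall>w\<in>neighbours V E v. 0 \<le> real (Defs.degree V E w) \<and> real (Defs.degree V E w) \<le> real (card V) - 2"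
    using deg' NV by auto
  show "(\<Sum>w\<in>neighbours V E v. real (Defs.degree V E w)) \<le> real (degree_sum V E)"
    unfolding degree_sum_def of_nat_sum by (rule sum_mono2[OF fin NV]) simp
  show "real (degree_sum V E) < 12 * real (card V)"
  proof -
    have "degree_sum V E < 12 * card V" using degree_sum_lt_if_no_K33_minor[OF G no] v by blast
    then show ?thesis by linarith
  qed
  show "card {w \<in> neighbours V E v. (2 * real (card V) + 2) / 3 < real (Defs.degree V E w)} \<le> 2"
    by (rule card_high_degree_neighbours_le_2[OF G no])
  fix b1 b2 assume b: "b1 \<in> neighbours V E v" "b2 \<in> neighbours V E v" "b1 \<noteq> b2"
  then have "v \<noteq> b1" "v \<noteq> b2" "b1 \<in> V" "b2 \<in> V"
    unfolding neighbours_def by (auto dest: simple_graph_irrefl[OF G])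
  from three_degrees_le[OF G no v this(3,4) this(1) b(3) this(2)]
  show "real (card (neighbours V E v)) + real (Defs.degree V E b1) + real (Defs.degree V E b2)
      \<le> 2 * real (card V) + 2"
    unfolding degree_eq_card_neighbours[of V E v] by linarith
qed (simp add: n)

text \<open>With \<open>m = n + 2\<close> and \<open>d\<^sub>v\<close> the degree of \<open>v\<close>, the vector \<open>x\<^sub>v = (d\<^sub>v + 3m/2) / (m - d\<^sub>v)\<close> satisfies
  \<open>\<Sum>\<^sub>w\<^sub>~\<^sub>v x\<^sub>w = (5m/2) \<Sum>\<^sub>w\<^sub>~\<^sub>v 1/(m - d\<^sub>w) - d\<^sub>v\<close>, so the neighbourhood inequality is exactly \<open>(Q x)\<^sub>v \<le> m x\<^sub>v\<close>.\<close>
definition q_test_vector :: "'a set \<Rightarrow> ('a \<Rightarrow> 'a \<Rightarrow> bool) \<Rightarrow> 'a \<Rightarrow> real" where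
  "q_test_vector V E v =
     (real (Defs.degree V E v) + 3 * (real (card V) + 2) / 2) / (real (card V) + 2 - real (Defs.degree V E v))"

lemma q_test_vector_pos:
  assumes "Defs.degree V E v < card V + 2"
  shows "0 < q_test_vector V E v"
  using assms unfolding q_test_vector_def by (simp add: field_simps)

lemma q_test_vector_supersolution:
  assumes G: "simple_graph V E" and no: "\<not> has_K33_minor V E" and n: "374 \<le> card V"
    and deg: "\<forall>w\<in>V. Defs.degree V E w \<le> card V - 2" and v: "v \<in> V"
  shows "signless_laplacian_apply V E (q_test_vector V E) v \<le> (real (card V) + 2) * q_test_vector V E v"
proof -
  define m where "m = real (card V) + 2"
  define d where "d w = real (Defs.degree V E w)" for w
  define N where "N = neighbours V E v"
  have gap: "4 \<le> m - d w" if "w \<in> V" for w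
    using deg[rule_format, OF that] n unfolding m_def d_def by linarith
  have "q_test_vector V E w = (5 * m / 2) * (1 / (m - d w)) - 1" if "w \<in> V" for w
    using gap[OF that] unfolding q_test_vector_def m_def d_def by (simp add: field_simps)
  then have "(\<Sum>w\<in>N. q_test_vector V E w) = (5 * m / 2) * (\<Sum>w\<in>N. 1 / (m - d w)) - d v"
    using neighbours_subset[of V E v]
    by (simp add: N_def d_def degree_eq_card_neighbours sum_subtractf sum_distrib_left subset_iff)
  also have "\<dots> \<le> (5 * m / 2) * ((4 * d v + 3 * m) / (5 * m)) - d v"
    using sum_inverse_neighbour_degrees_le_graph[OF assms] unfolding N_def m_def d_def
    by (intro diff_right_mono mult_left_mono) auto
  also have "\<dots> = (m - d v) * q_test_vector V E v"
    using gap[OF v] n unfolding q_test_vector_def m_def d_def by (simp add: field_simps)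
  finally show ?thesis
    unfolding signless_laplacian_apply_def N_def neighbours_def m_def d_def by (simp add: algebra_simps)
qed

theorem lemma4p2:
  fixes V :: "'a set" and E :: "'a \<Rightarrow> 'a \<Rightarrow> bool"
  assumes "simple_graph V E"
    and "edge_maximal_K33_minor_free V E"
    and "card V \<ge> 374"
    and "card V - 3 \<le> max_degree V E"
    and "max_degree V E \<le> card V - 2"
  shows "q_index V E \<le> real (card V) + 2"
proof (rule q_index_le_if_supersolution[OF assms(1)])
  have no: "\<not> has_K33_minor V E"
    using assms(2) unfolding edge_maximal_K33_minor_free_def by blast
  have deg: "\<forall>w\<in>V. Defs.degree V E w \<le> card V - 2"
  proof
    fix w assume "w \<in> V"
    then have "Defs.degree V E w \<le> max_degree V E"
      unfolding max_degree_def using simple_graph_finite[OF assms(1)] by (intro Max_ge) auto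
    then show "Defs.degree V E w \<le> card V - 2" using assms(5) by linarith
  qed
  show "V \<noteq> {}" using assms(3) by auto
  show "\<forall>v\<in>V. 0 < q_test_vector V E v"
    using deg assms(3) by (auto intro!: q_test_vector_pos)
  show "\<forall>v\<in>V. signless_laplacian_apply V E (q_test_vector V E) v \<le> (real (card V) + 2) * q_test_vector V E v"
    using q_test_vector_supersolution[OF assms(1) no assms(3) deg] by blast
qed

end
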